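(* For every integer $n\geq -1$, the polynomial $e_1^{n}\,\tilde e_1^{\,n-1}\in\mathbb{Z}\langle X\rangle$ is a polynomial with Jordan property.
   Context: Rings are associative with $1$; homomorphisms preserve $1$. A Jordan homomorphism $\alpha:R\to R'$ is a map with $(a+b)^\alpha=a^\alpha+b^\alpha$, $1^\alpha=1'$, $(aba)^\alpha=a^\alpha b^\alpha a^\alpha$ for all $a,b\in R$. Let $\mathbb{Z}\langle X\rangle$ be the free $\mathbb{Z}$-algebra on non-commuting indeterminates $x_1,x_2,\ldots$. For a finite or infinite sequence $T=(t_1,t_2,\ldots)$ in a ring $R$, $f(T)$ denotes the image of $f\in\mathbb{Z}\langle X\rangle$ under the homomorphism $x_i\mapsto t_i$ (finite sequences are padded with zeros, i.e. $x_i\mapsto 0$ for $i$ beyond the length). A polynomial $f\in\mathbb{Z}\langle X\rangle$ has the Jordan property if $f(T)^\alpha=f(T^\alpha)$ for every Jordan homomorphism $\alpha:R\to R'$ between arbitrary rings and every finite or infinite sequence $T$ in $R$, where $T^\alpha=(t_1^\alpha,t_2^\alpha,\ldots)$. Define $e^{(-2)}:=-1$, $e^{(-1)}:=0$, $e^{(0)}:=1$, $e^{(n)}:=e^{(n-1)}x_n-e^{(n-2)}$ for $n\geq1$. Put $e_1^{m}:=e^{(m)}$ for $m\geq -2$, and $\tilde e_1^{\,m}:=e^{(m)}(x_m,x_{m-1},\ldots,x_1)$ (the polynomial obtained from $e^{(m)}$ by substituting $x_i\mapsto x_{m+1-i}$ for $i\leq m$) for $m\geq 1$, $\tilde e_1^{\,m}:=e^{(m)}$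 for $-2\leq m\leq 0$. *)

theory Defs
  imports Main
begin

text \<open>Elements of the free Z-algebra Z<X> on x_1, x_2, ... are represented by
  (non-unique) ring expressions; every element of Z<X> is the value of such an
  expression and evaluation at a sequence is the induced ring homomorphism.
  Variable x_i is Var i (i >= 1); a sequence T = (t_1, t_2, ...) is a function
  T :: nat => 'a with T i = t_i (T 0 is never used). Finite sequences are the
  special case of sequences that are eventually zero.\<close>

datatype ncpoly = Var nat | Const int | Add ncpoly ncpoly | Mul ncpoly ncpoly | Neg ncpoly

fun eval :: "(nat \<Rightarrow> 'a::ring_1) \<Rightarrow> ncpoly \<Rightarrow> 'a" where
  "eval T (Var i) = T i"
| "eval T (Const c) = of_int c"
| "eval T (Add p q) = eval T p + eval T q"
| "eval T (Mul p q) = eval T p * eval T q"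
| "eval T (Neg p) = - eval T p"

fun rename :: "(nat \<Rightarrow> nat) \<Rightarrow> ncpoly \<Rightarrow> ncpoly" where
  "rename \<sigma> (Var i) = Var (\<sigma> i)"
| "rename \<sigma> (Const c) = Const c"
| "rename \<sigma> (Add p q) = Add (rename \<sigma> p) (rename \<sigma> q)"
| "rename \<sigma> (Mul p q) = Mul (rename \<sigma> p) (rename \<sigma> q)"
| "rename \<sigma> (Neg p) = Neg (rename \<sigma> p)"

definition Sub :: "ncpoly \<Rightarrow> ncpoly \<Rightarrow> ncpoly" where
  "Sub p q = Add p (Neg q)"

definition jordan_hom :: "('a::ring_1 \<Rightarrow> 'b::ring_1) \<Rightarrow> bool" where
  "jordan_hom \<alpha> \<longleftrightarrow> (\<forall>a b. \<alpha> (a + b) = \<alpha> a + \<alpha> b) \<and> \<alpha> 1 = 1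
     \<and> (\<forall>a b. \<alpha> (a * b * a) = \<alpha> a * \<alpha> b * \<alpha> a)"

text \<open>e^(n) for n >= 0: e^(0) = 1, e^(1) = e^(0) x_1 - e^(-1) = 1*x_1 - 0,
  e^(n+2) = e^(n+1) x_(n+2) - e^(n).\<close>
fun enat :: "nat \<Rightarrow> ncpoly" where
  "enat 0 = Const 1"
| "enat (Suc 0) = Sub (Mul (Const 1) (Var 1)) (Const 0)"
| "enat (Suc (Suc n)) = Sub (Mul (enat (Suc n)) (Var (Suc (Suc n)))) (enat n)"

text \<open>e^(m) for integer m >= -2 (value at m < -2 is irrelevant).\<close>
definition e :: "int \<Rightarrow> ncpoly" where
  "e m = (if m = -2 then Const (-1) else if m = -1 then Const 0 else enat (nat m))"

definition e1 :: "int \<Rightarrow> ncpoly" where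
  "e1 m = e m"

definition e1_tilde :: "int \<Rightarrow> ncpoly" where
  "e1_tilde m = (if m \<ge> 1
      then rename (\<lambda>i. if 1 \<le> i \<and> int i \<le> m then nat (m + 1 - int i) else i) (e m)
      else e m)"

end

theory Submission
  imports Defs
begin

text \<open>Let c(n) be the continuant e^(n) evaluated at a sequence and c*(n) the same continuant
  read backwards, so the polynomial in question is c(n) c*(n - 1). The sandwich
  W(n, y) = c(n) y c*(n) is expressed through W(n - 1), W(n - 2), products aba and the linearized
  sandwich V(n, u, v) = c(n + 1) u v c*(n) + c(n) v u c*(n + 1), and V(n) in turn through W(n),
  V(n - 1) and Jordan triple products abc + cba. So by induction a Jordan homomorphism commutes
  with W(n) and V(n), and then with c(n + 2) c*(n + 1) = W(n + 1, x(n + 2)) - c(n) c*(n + 1).\<close>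

fun continuant :: "(nat \<Rightarrow> 'a::ring_1) \<Rightarrow> nat \<Rightarrow> 'a" where
  "continuant S 0 = 1"
| "continuant S (Suc 0) = S 1"
| "continuant S (Suc (Suc n)) = continuant S (Suc n) * S (Suc (Suc n)) - continuant S n"

fun continuant_rev :: "(nat \<Rightarrow> 'a::ring_1) \<Rightarrow> nat \<Rightarrow> 'a" where
  "continuant_rev S 0 = 1"
| "continuant_rev S (Suc 0) = S 1"
| "continuant_rev S (Suc (Suc n)) = S (Suc (Suc n)) * continuant_rev S (Suc n) - continuant_rev S n"

lemma eval_enat: "eval S (enat n) = continuant S n"
  by (induction n rule: enat.induct) (simp_all add: Sub_def)

lemma eval_rename: "eval T (rename \<sigma> p) = eval (T \<circ> \<sigma>) p"
  by (induction p) auto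

lemma continuant_expand_left:
  "continuant S (Suc (Suc n)) =
     S 1 * continuant (\<lambda>i. S (Suc i)) (Suc n) - continuant (\<lambda>i. S (Suc (Suc i))) n"
proof (induction n rule: less_induct)
  case (less n)
  consider "n = 0" | "n = 1" | m where "n = Suc (Suc m)"
    by (metis One_nat_def not0_implies_Suc)
  then show ?case
  proof cases
    case 3
    let ?S1 = "\<lambda>i. S (Suc i)" and ?S2 = "\<lambda>i. S (Suc (Suc i))"
      and ?x = "S (Suc (Suc (Suc (Suc m))))"
    have IH:
      "continuant S (Suc (Suc m)) = S 1 * continuant ?S1 (Suc m) - continuant ?S2 m"
      "continuant S (Suc (Suc (Suc m))) =
         S 1 * continuant ?S1 (Suc (Suc m)) - continuant ?S2 (Suc m)"
      using 3 by (intro less; simp)+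
    have "continuant S (Suc (Suc (Suc (Suc m)))) =
        continuant S (Suc (Suc (Suc m))) * ?x - continuant S (Suc (Suc m))"
      by (rule continuant.simps(3))
    also have "\<dots> = S 1 * (continuant ?S1 (Suc (Suc m)) * ?x - continuant ?S1 (Suc m))
        - (continuant ?S2 (Suc m) * ?x - continuant ?S2 m)"
      unfolding IH
      by (simp add: algebra_simps del: continuant.simps)
    also have "\<dots> = S 1 * continuant ?S1 (Suc (Suc (Suc m))) - continuant ?S2 (Suc (Suc m))"
      by (simp only: continuant.simps(3)[of ?S1 "Suc m"] continuant.simps(3)[of ?S2 m])
    finally show ?thesis
      using 3 by simp
  qed (simp_all add: algebra_simps numeral_2_eq_2 numeral_3_eq_3)
qed

lemma continuant_reversed:
  assumes "\<And>i. 1 \<le> i \<Longrightarrow> i \<le> n \<Longrightarrow> S' i = S (n + 1 - i)"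
  shows "continuant S' n = continuant_rev S n"
  using assms
proof (induction S n arbitrary: S' rule: continuant_rev.induct)
  case (3 S n)
  have "continuant (\<lambda>i. S' (Suc i)) (Suc n) = continuant_rev S (Suc n)"
    using "3.prems" by (intro "3.IH"(1)) auto
  moreover have "continuant (\<lambda>i. S' (Suc (Suc i))) n = continuant_rev S n"
    using "3.prems" by (intro "3.IH"(2)) auto
  moreover have "S' 1 = S (Suc (Suc n))"
    using "3.prems" by auto
  ultimately show ?case
    unfolding continuant_expand_left by simp
qed simp_all

lemma eval_e1: "eval T (e1 (int n)) = continuant T n"
  by (simp add: e1_def e_def eval_enat)

lemma eval_e1_tilde: "eval T (e1_tilde (int n)) = continuant_rev T n"
proof (cases "n = 0")
  case False
  define \<sigma> where "\<sigma> = (\<lambda>i. if 1 \<le> i \<and> i \<le> n then n + 1 - i else i)"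
  have "(\<lambda>i. if 1 \<le> i \<and> int i \<le> int n then nat (int n + 1 - int i) else i) = \<sigma>"
    by (auto simp: \<sigma>_def fun_eq_iff)
  then have "eval T (e1_tilde (int n)) = continuant (T \<circ> \<sigma>) n"
    using False by (simp add: e1_tilde_def e_def eval_rename eval_enat)
  also have "\<dots> = continuant_rev T n"
    by (rule continuant_reversed) (simp add: \<sigma>_def)
  finally show ?thesis .
qed (simp add: e1_tilde_def e_def)

definition sandwich :: "(nat \<Rightarrow> 'a::ring_1) \<Rightarrow> nat \<Rightarrow> 'a \<Rightarrow> 'a" where
  "sandwich T n y = continuant T n * y * continuant_rev T n"

definition cross_sandwich :: "(nat \<Rightarrow> 'a::ring_1) \<Rightarrow> nat \<Rightarrow> 'a \<Rightarrow> 'a \<Rightarrow> 'a" where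
  "cross_sandwich T n u v =
     continuant T (Suc n) * u * v * continuant_rev T n + continuant T n * v * u * continuant_rev T (Suc n)"

lemma sandwich_0: "sandwich T 0 y = y"
  by (simp add: sandwich_def)

lemma sandwich_1: "sandwich T (Suc 0) y = T 1 * y * T 1"
  by (simp add: sandwich_def)

lemma sandwich_Suc_Suc:
  "sandwich T (Suc (Suc n)) y =
     sandwich T (Suc n) (T (Suc (Suc n)) * y * T (Suc (Suc n))) + sandwich T n y
     - cross_sandwich T n (T (Suc (Suc n))) y"
  by (simp add: sandwich_def cross_sandwich_def algebra_simps)

lemma cross_sandwich_0: "cross_sandwich T 0 u v = T 1 * u * v + v * u * T 1"
  by (simp add: cross_sandwich_def)

lemma cross_sandwich_Suc:
  "cross_sandwich T (Suc n) u v =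
     sandwich T (Suc n) (T (Suc (Suc n)) * u * v + v * u * T (Suc (Suc n)))
     - cross_sandwich T n v u"
  by (simp add: sandwich_def cross_sandwich_def algebra_simps)

lemma continuant_Suc_mult_rev:
  "continuant T (Suc (Suc n)) * continuant_rev T (Suc n) =
     sandwich T (Suc n) (T (Suc (Suc n))) - continuant T n * continuant_rev T (Suc n)"
  by (simp add: sandwich_def algebra_simps)

lemma continuant_mult_rev_Suc:
  "continuant T (Suc n) * continuant_rev T (Suc (Suc n)) =
     sandwich T (Suc n) (T (Suc (Suc n))) - continuant T (Suc n) * continuant_rev T n"
  by (simp add: sandwich_def algebra_simps)

locale jordan_homomorphism =
  fixes \<alpha> :: "'a::ring_1 \<Rightarrow> 'b::ring_1"
  assumes jordan_hom: "jordan_hom \<alpha>"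
begin

lemma map_add: "\<alpha> (a + b) = \<alpha> a + \<alpha> b"
  using jordan_hom by (simp add: jordan_hom_def)

lemma map_quadratic: "\<alpha> (a * b * a) = \<alpha> a * \<alpha> b * \<alpha> a"
  using jordan_hom by (simp add: jordan_hom_def)

lemma map_zero: "\<alpha> 0 = 0"
  using map_add[of 0 0] by simp

lemma map_minus: "\<alpha> (- a) = - \<alpha> a"
  using minus_unique[of "\<alpha> a" "\<alpha> (- a)"] map_add[of a "- a"] by (simp add: map_zero)

lemma map_diff: "\<alpha> (a - b) = \<alpha> a - \<alpha> b"
  using map_add[of a "- b"] by (simp add: map_minus)

text \<open>Linearization of \<open>map_quadratic\<close> at \<open>a + c\<close>.\<close>
lemma map_triple: "\<alpha> (a * b * c + c * b * a) = \<alpha> a * \<alpha> b * \<alpha> c + \<alpha> c * \<alpha> b * \<alpha> a"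
proof -
  have expand: "(a + c) * b * (a + c) = a * b * a + c * b * c + (a * b * c + c * b * a)"
    by (simp add: algebra_simps)
  have "\<alpha> (a * b * a) + \<alpha> (c * b * c) + \<alpha> (a * b * c + c * b * a) = \<alpha> ((a + c) * b * (a + c))"
    by (simp only: expand map_add)
  also have "\<dots> = (\<alpha> a + \<alpha> c) * \<alpha> b * (\<alpha> a + \<alpha> c)"
    by (simp only: map_quadratic map_add)
  also have "\<dots> = \<alpha> a * \<alpha> b * \<alpha> a + \<alpha> c * \<alpha> b * \<alpha> c
      + (\<alpha> a * \<alpha> b * \<alpha> c + \<alpha> c * \<alpha> b * \<alpha> a)"
    by (simp add: algebra_simps)
  finally show ?thesis
    by (simp add: map_quadratic)
qed

definition preserves_sandwiches :: "(nat \<Rightarrow> 'a) \<Rightarrow> nat \<Rightarrow> bool" where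
  "preserves_sandwiches T n \<longleftrightarrow>
     (\<forall>y. \<alpha> (sandwich T n y) = sandwich (\<alpha> \<circ> T) n (\<alpha> y)) \<and>
     (\<forall>u v. \<alpha> (cross_sandwich T n u v) = cross_sandwich (\<alpha> \<circ> T) n (\<alpha> u) (\<alpha> v))"

lemma preserves_sandwiches_0: "preserves_sandwiches T 0"
  by (simp add: preserves_sandwiches_def sandwich_0 cross_sandwich_0 map_triple)

lemma preserves_sandwiches_1: "preserves_sandwiches T (Suc 0)"
  using preserves_sandwiches_0[of T]
  by (simp add: preserves_sandwiches_def sandwich_1 map_quadratic
      cross_sandwich_Suc map_diff map_triple)

lemma preserves_sandwiches_Suc_Suc:
  assumes "preserves_sandwiches T n" and "preserves_sandwiches T (Suc n)"
  shows "preserves_sandwiches T (Suc (Suc n))"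
proof -
  have "\<alpha> (sandwich T (Suc (Suc n)) y) = sandwich (\<alpha> \<circ> T) (Suc (Suc n)) (\<alpha> y)" for y
    using assms
    by (simp add: preserves_sandwiches_def sandwich_Suc_Suc map_diff map_add map_quadratic)
  then show ?thesis
    using assms by (simp add: preserves_sandwiches_def cross_sandwich_Suc map_diff map_triple)
qed

lemma preserves_sandwiches: "preserves_sandwiches T n"
proof -
  have "preserves_sandwiches T n \<and> preserves_sandwiches T (Suc n)"
    by (induction n)
      (simp_all add: preserves_sandwiches_0 preserves_sandwiches_1 preserves_sandwiches_Suc_Suc)
  then show ?thesis ..
qed

lemma map_continuant_mult_rev:
  "\<alpha> (continuant T (Suc n) * continuant_rev T n) =
     continuant (\<alpha> \<circ> T) (Suc n) * continuant_rev (\<alpha> \<circ> T) n \<and>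
   \<alpha> (continuant T n * continuant_rev T (Suc n)) =
     continuant (\<alpha> \<circ> T) n * continuant_rev (\<alpha> \<circ> T) (Suc n)"
proof (induction n)
  case (Suc n)
  then show ?case
    unfolding continuant_Suc_mult_rev continuant_mult_rev_Suc map_diff
    using preserves_sandwiches[of T "Suc n"] by (simp add: preserves_sandwiches_def comp_def)
qed simp

end

theorem proposition3p3:
  fixes \<alpha> :: "'a::ring_1 \<Rightarrow> 'b::ring_1" and n :: int and T :: "nat \<Rightarrow> 'a"
  assumes "n \<ge> -1" and "jordan_hom \<alpha>"
  shows "\<alpha> (eval T (Mul (e1 n) (e1_tilde (n - 1)))) = eval (\<alpha> \<circ> T) (Mul (e1 n) (e1_tilde (n - 1)))"
proof -
  interpret jordan_homomorphism \<alpha>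
    using assms(2) by unfold_locales
  have "n = -1 \<or> n = 0 \<or> n = int (Suc (nat (n - 1)))"
    using assms(1) by linarith
  then consider "n = -1" | "n = 0" | k where "n = int (Suc k)"
    by blast
  then show ?thesis
  proof cases
    case (3 k)
    then have "n - 1 = int k"
      by simp
    with 3 show ?thesis
      by (simp only: eval.simps eval_e1 eval_e1_tilde map_continuant_mult_rev)
  qed (simp_all add: e1_def e1_tilde_def e_def map_zero)
qed

end
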